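(* Let $r\ge d\ge1$ be integers. Then: (i) $g^{r,d}_0$ is the $f$-vector of a simplicial complex. (ii) For $1\le k\le r$, $g^{r,d}_k$ is admissible for $g^{r,d}_0$. (iii) If $d$ is odd and $k\ge d/2$, then $\hat g^{r,d}_k$ is admissible for $(g^{r,d}_0,0)$.
   Context: For integers $r\ge0$, $d\ge1$ and $i\in\mathbb Z$, $C(r,d,i)$ denotes the number of integer vectors $(u_1,\dots,u_d)$ with $u_1+\cdots+u_d=i$ and $0\le u_l\le r$ for all $l$. For integers $d\ge1$, $r\ge1$, $k\ge0$: if $0\le k\le r-1$, let $\hat g^{r,d}_k=(g_0,g_1,\dots,g_{\lfloor d/2\rfloor+1})\in\mathbb Z^{\lfloor d/2\rfloor+2}$ with $g_0=C(r-1,d,-k)=\delta_{0,k}$ and $g_i=C(r-1,d,ir-k)-C(r-1,d,(i-1)r-k)$ for $1\le i\le\lfloor d/2\rfloor+1$; if $k\ge r$, $\hat g^{r,d}_k$ is the zero vector. The vector $g^{r,d}_k\in\mathbb Z^{\lfloor d/2\rfloor+1}$ is obtained from $\hat g^{r,d}_k$ by deleting its last entry; $(v,0)$ denotes $v$ with a $0$ appended. A vector $(1,f_0,\dots,f_m)\in\mathbb Z^{m+2}$ is called the $f$-vector of a simplicial complex if there is a simplicial complex $\Delta$ with $f_{i}(\Delta)=f_i$ for $0\le i\le m$ and no faces of dimension $>m$ (so trailing zero entries are allowed; $f_i(\Delta)$ is the number of faces of dimension $i$). Let $f=(1,f_0,\dots,f_m)\in\mathbb Z^{m+2}$ be the $f$-vector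 of a simplicial complex. A vector $\alpha\in\mathbb Z^{m+2}$ is a basic admissible vector for $f$ if $\alpha=(0,1,\alpha_0,\dots,\alpha_{m-1})$ where $(1,\alpha_0,\dots,\alpha_{m-1})$ is the $f$-vector of a simplicial complex and $\alpha_i\le f_i$ for $0\le i\le m-1$. A vector $\beta\in\mathbb Z^{m+2}$ is admissible for $f$ if there are $t\ge0$ vectors $\beta^{(1)},\dots,\beta^{(t)}\in\mathbb Z^{m+2}$ with $\beta=\beta^{(1)}+\cdots+\beta^{(t)}$ such that $\beta^{(j)}$ is a basic admissible vector for $f+\beta^{(1)}+\cdots+\beta^{(j-1)}$ for each $1\le j\le t$ (for $t=0$, $\beta$ is the zero vector). *)

theory Defs
  imports Main
begin

text \<open>Vectors in Z^n are represented as int lists of length n.\<close>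

definition Ccount :: "nat \<Rightarrow> nat \<Rightarrow> int \<Rightarrow> nat" where
  "Ccount r d i = card {u :: int list. length u = d \<and> sum_list u = i \<and>
                         (\<forall>x\<in>set u. 0 \<le> x \<and> x \<le> int r)}"

definition ghat :: "nat \<Rightarrow> nat \<Rightarrow> nat \<Rightarrow> int list" where
  "ghat r d k = (if k < r then
      map (\<lambda>i. if i = 0 then int (Ccount (r - 1) d (- int k))
                else int (Ccount (r - 1) d (int i * int r - int k))
                   - int (Ccount (r - 1) d ((int i - 1) * int r - int k)))
          [0..<d div 2 + 2]
    else replicate (d div 2 + 2) 0)"

definition gvec :: "nat \<Rightarrow> nat \<Rightarrow> nat \<Rightarrow> int list" where
  "gvec r d k = butlast (ghat r d k)"

text \<open>A list v = (1, f_0, ..., f_m) of length m+2 is the f-vector of a simplicial complex: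
  entry j counts faces of cardinality j (dimension j-1); no faces of dimension > m.\<close>
definition is_fvector :: "int list \<Rightarrow> bool" where
  "is_fvector v \<longleftrightarrow> v \<noteq> [] \<and> hd v = 1 \<and>
     (\<exists>\<Delta> :: nat set set. finite \<Delta> \<and> (\<forall>F\<in>\<Delta>. finite F) \<and>
        (\<forall>F\<in>\<Delta>. \<forall>G. G \<subseteq> F \<longrightarrow> G \<in> \<Delta>) \<and>
        (\<forall>F\<in>\<Delta>. card F < length v) \<and>
        (\<forall>j<length v. int (card {F\<in>\<Delta>. card F = j}) = v ! j))"

definition vadd :: "int list \<Rightarrow> int list \<Rightarrow> int list" where
  "vadd a b = map2 (+) a b"

text \<open>alpha = (0, 1, alpha_0, ..., alpha_{m-1}) basic admissible for f = (1, f_0, ..., f_m).\<close>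
definition basic_admissible :: "int list \<Rightarrow> int list \<Rightarrow> bool" where
  "basic_admissible f \<alpha> \<longleftrightarrow> length \<alpha> = length f \<and> length f \<ge> 2 \<and>
     \<alpha> ! 0 = 0 \<and> \<alpha> ! 1 = 1 \<and> is_fvector (drop 1 \<alpha>) \<and>
     (\<forall>j. 2 \<le> j \<and> j < length f \<longrightarrow> \<alpha> ! j \<le> f ! (j - 1))"

definition vsum :: "nat \<Rightarrow> int list list \<Rightarrow> int list" where
  "vsum n bs = foldr vadd bs (replicate n 0)"

definition admissible :: "int list \<Rightarrow> int list \<Rightarrow> bool" where
  "admissible f \<beta> \<longleftrightarrow> (\<exists>bs :: int list list.
     \<beta> = vsum (length f) bs \<and>
     (\<forall>j<length bs. basic_admissible (vadd f (vsum (length f) (take j bs))) (bs ! j)))"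

end

theory Submission
  imports Defs
begin

text \<open>
  Write \<open>P(n)\<close> for the number of \<open>d\<close>-tuples in \<open>{0..r-1}\<close> with sum \<open>n\<close>; the entries of
  \<open>\<hat>g^{r,d}_k\<close> are \<open>P(ir - k) - P((i - 1)r - k)\<close>.  The theorem is proved by realizing these
  numbers with explicit simplicial complexes, by induction on \<open>d\<close>.

  First the counting facts: \<open>P\<close> is symmetric and unimodal about \<open>d(r - 1)/2\<close>, which determines the
  signs of the entries just above the middle, and the columns satisfy the recurrence
  \<open>g^{r,d+1}_k(i) = \<Sum>k\<le>j<r. g^{r,d}_j(i) + \<Sum>j<k. g^{r,d}_j(i - 1)\<close>.
  Second the complexes: coning over a subcomplex \<open>L\<close> adds the shifted \<open>f\<close>-vector \<open>(0, f(L))\<close>, so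
  the total shifted \<open>f\<close>-vector of a family of subcomplexes of \<open>\<Delta>\<close> is admissible for \<open>f(\<Delta>)\<close>.
  Third the induction (invariant \<open>realizable r d\<close>): a complex \<open>\<Delta>\<close> with \<open>f\<close>-vector \<open>g^{r,d}_0\<close> and
  families of subcomplexes realizing the columns \<open>g^{r,d}_k\<close>.  For \<open>d + 1\<close>, cone over the families of
  all columns in turn; by the recurrence, truncations of the intermediate complexes together with
  the old families realize the new columns.
\<close>

text \<open>\<open>ncomp r d n\<close> is the number of \<open>d\<close>-tuples with entries in \<open>{0..r-1}\<close> summing to \<open>n\<close>,
  i.e. the coefficient of \<open>x^n\<close> in \<open>(1 + x + \<dots> + x^(r-1))^d\<close>.\<close>

fun ncomp :: "nat \<Rightarrow> nat \<Rightarrow> int \<Rightarrow> int" where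
  "ncomp r 0 n = (if n = 0 then 1 else 0)"
| "ncomp r (Suc d) n = (\<Sum>j<r. ncomp r d (n - int j))"

lemma ncomp_neg: "n < 0 \<Longrightarrow> ncomp r d n = 0"
  by (induction d arbitrary: n) auto

lemma ncomp_nonneg: "0 \<le> ncomp r d n"
  by (induction d arbitrary: n) (auto intro: sum_nonneg)

lemma ncomp_zero:
  assumes "1 \<le> r"
  shows "ncomp r d 0 = 1"
proof (induction d)
  case (Suc d)
  have "(\<Sum>j<r. ncomp r d (0 - int j)) = (\<Sum>j\<in>{0}. ncomp r d (0 - int j))"
    by (rule sum.mono_neutral_right) (use assms in \<open>auto intro: ncomp_neg\<close>)
  with Suc show ?case by simp
qed simp

definition tuples :: "nat \<Rightarrow> nat \<Rightarrow> int \<Rightarrow> int list set" where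
  "tuples s d n = {u. length u = d \<and> sum_list u = n \<and> (\<forall>x\<in>set u. 0 \<le> x \<and> x \<le> int s)}"

lemma finite_tuples: "finite (tuples s d n)"
proof (rule finite_subset)
  show "tuples s d n \<subseteq> {u. set u \<subseteq> {0..int s} \<and> length u = d}"
    unfolding tuples_def by auto
qed (rule finite_lists_length_eq, simp)

lemma tuples_Suc:
  "tuples s (Suc d) n = (\<Union>j\<in>{0..s}. (#) (int j) ` tuples s d (n - int j))"
proof (intro set_eqI iffI)
  fix u assume "u \<in> tuples s (Suc d) n"
  then obtain x v where u: "u = x # v" and "0 \<le> x" "x \<le> int s" "v \<in> tuples s d (n - x)"
    unfolding tuples_def by (cases u) auto
  then have "nat x \<in> {0..s}" "u = int (nat x) # v" "v \<in> tuples s d (n - int (nat x))"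
    by auto
  then show "u \<in> (\<Union>j\<in>{0..s}. (#) (int j) ` tuples s d (n - int j))" by blast
qed (auto simp: tuples_def)

lemma Ccount_Suc:
  "int (Ccount s (Suc d) n) = (\<Sum>j\<in>{0..s}. int (Ccount s d (n - int j)))"
proof -
  have "card (tuples s (Suc d) n) = (\<Sum>j\<in>{0..s}. card ((#) (int j) ` tuples s d (n - int j)))"
    unfolding tuples_Suc by (rule card_UN_disjoint) (auto simp: finite_tuples)
  also have "\<dots> = (\<Sum>j\<in>{0..s}. card (tuples s d (n - int j)))"
    by (rule sum.cong) (auto simp: card_image)
  finally show ?thesis unfolding Ccount_def tuples_def[symmetric] by simp
qed

lemma Ccount_eq_ncomp:
  assumes "1 \<le> r"
  shows "int (Ccount (r - 1) d n) = ncomp r d n"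
proof (induction d arbitrary: n)
  case 0
  have "tuples (r - 1) 0 n = (if n = 0 then {[]} else {})" unfolding tuples_def by auto
  then show ?case unfolding Ccount_def tuples_def[symmetric] by simp
next
  case (Suc d)
  have "{0..r - 1} = {..<r}" using assms by auto
  with Suc show ?case by (simp add: Ccount_Suc)
qed

text \<open>Symmetry \<open>u \<mapsto> (r - 1) - u\<close> of the entries: the counts are symmetric about \<open>d(r - 1)/2\<close>.\<close>

lemma ncomp_symmetric:
  assumes "1 \<le> r"
  shows "ncomp r d n = ncomp r d (int d * (int r - 1) - n)"
proof (induction d arbitrary: n)
  case (Suc d)
  have "ncomp r (Suc d) (int (Suc d) * (int r - 1) - n)
      = (\<Sum>j<r. ncomp r d (int d * (int r - 1) - (n - (int r - 1 - int j))))"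
    by (simp add: algebra_simps)
  also have "\<dots> = (\<Sum>j<r. ncomp r d (n - (int r - 1 - int j)))"
    by (simp only: Suc.IH[symmetric])
  also have "\<dots> = (\<Sum>j<r. ncomp r d (n - int (r - Suc j)))"
    by (intro sum.cong refl) (simp add: of_nat_diff Suc_le_eq algebra_simps)
  also have "\<dots> = (\<Sum>j<r. ncomp r d (n - int j))"
    by (rule sum.nat_diff_reindex)
  finally show ?case by simp
qed simp

lemma ncomp_Suc_difference:
  assumes "1 \<le> r"
  shows "ncomp r (Suc d) (n + 1) - ncomp r (Suc d) n = ncomp r d (n + 1) - ncomp r d (n + 1 - int r)"
proof -
  obtain r' where r: "r = Suc r'" using assms by (cases r) auto
  have "ncomp r (Suc d) (n + 1) = ncomp r d (n + 1) + (\<Sum>j<r'. ncomp r d (n - int j))"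
    unfolding r ncomp.simps sum.lessThan_Suc_shift by simp
  moreover have "ncomp r (Suc d) n = (\<Sum>j<r'. ncomp r d (n - int j)) + ncomp r d (n + 1 - int r)"
    unfolding r ncomp.simps sum.lessThan_Suc by simp
  ultimately show ?thesis by simp
qed

lemma symmetric_unimodal_central:
  fixes f :: "int \<Rightarrow> int" and c :: int
  assumes sym: "\<And>n. f n = f (c - n)"
    and up: "\<And>n. 2 * (n + 1) \<le> c \<Longrightarrow> f n \<le> f (n + 1)"
    and closer: "\<bar>2 * a - c\<bar> \<le> \<bar>2 * b - c\<bar>"
  shows "f b \<le> f a"
proof -
  have mono: "f x \<le> f (x + int t)" if "2 * (x + int t) \<le> c" for x t
    using that
  proof (induction t)
    case (Suc t)
    then have "f x \<le> f (x + int t)" by simp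
    also have "\<dots> \<le> f (x + int t + 1)" using Suc.prems by (intro up) simp
    finally show ?case by (simp add: algebra_simps)
  qed simp
  define a' where "a' = (if 2 * a \<le> c then a else c - a)"
  define b' where "b' = (if 2 * b \<le> c then b else c - b)"
  have "f a = f a'" "f b = f b'" unfolding a'_def b'_def using sym by auto
  moreover have "b' \<le> a'" "2 * a' \<le> c" using closer unfolding a'_def b'_def by auto
  ultimately show ?thesis using mono[of b' "nat (a' - b')"] by simp
qed

lemma ncomp_central:
  assumes "1 \<le> r"
    and "\<bar>2 * a - int d * (int r - 1)\<bar> \<le> \<bar>2 * b - int d * (int r - 1)\<bar>"
  shows "ncomp r d b \<le> ncomp r d a"
  using assms(2)
proof (induction d arbitrary: a b)
  case 0
  then show ?case using ncomp_nonneg[of r 0 b] by auto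
next
  case (Suc d)
  show ?case
  proof (rule symmetric_unimodal_central[where f = "ncomp r (Suc d)"])
    show "\<And>n. ncomp r (Suc d) n = ncomp r (Suc d) (int (Suc d) * (int r - 1) - n)"
      by (rule ncomp_symmetric[OF assms(1)])
  next
    fix n assume half: "2 * (n + 1) \<le> int (Suc d) * (int r - 1)"
    have "ncomp r d (n + 1 - int r) \<le> ncomp r d (n + 1)"
      using half assms(1) by (intro Suc.IH) (simp add: algebra_simps abs_if)
    then show "ncomp r (Suc d) n \<le> ncomp r (Suc d) (n + 1)"
      using ncomp_Suc_difference[OF assms(1), of d n] by linarith
  qed (rule Suc.prems)
qed

definition gentry :: "nat \<Rightarrow> nat \<Rightarrow> nat \<Rightarrow> nat \<Rightarrow> int" where
  "gentry r d k i = ncomp r d (int i * int r - int k) - ncomp r d ((int i - 1) * int r - int k)"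

lemma gentry_0_0: "1 \<le> r \<Longrightarrow> gentry r d 0 0 = 1"
  unfolding gentry_def by (simp add: ncomp_neg ncomp_zero)

lemma gentry_at_0: "1 \<le> k \<Longrightarrow> gentry r d k 0 = 0"
  unfolding gentry_def by (simp add: ncomp_neg)

lemma gentry_column_0:
  assumes "1 \<le> r" and "1 \<le> k"
  shows "(\<Sum>j<k. gentry r d j 0) = 1"
proof -
  have "(\<Sum>j<k. gentry r d j 0) = (\<Sum>j\<in>{0}. gentry r d j 0)"
    using assms(2) by (intro sum.mono_neutral_right) (auto simp: gentry_at_0)
  then show ?thesis using gentry_0_0[OF assms(1)] by simp
qed

lemma gentry_Suc:
  assumes "k \<le> r"
  shows "gentry r (Suc d) k i
       = (\<Sum>j\<in>{k..<r}. gentry r d j i) + (if i = 0 then 0 else (\<Sum>j<k. gentry r d j (i - 1)))"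
proof -
  define F where "F j = ncomp r d (int i * int r - int j) - ncomp r d ((int i - 1) * int r - int j)" for j
  have "gentry r (Suc d) k i = (\<Sum>j<r. F (j + k))"
    unfolding gentry_def F_def ncomp.simps sum_subtractf[symmetric]
    by (intro sum.cong refl) (simp add: algebra_simps)
  also have "\<dots> = (\<Sum>j\<in>{0 + k..<r + k}. F j)"
    by (simp only: sum.shift_bounds_nat_ivl lessThan_atLeast0)
  also have "\<dots> = (\<Sum>j\<in>{k..<r}. F j) + (\<Sum>j\<in>{0 + r..<k + r}. F j)"
    using assms by (simp add: sum.atLeastLessThan_concat add.commute)
  also have "(\<Sum>j\<in>{0 + r..<k + r}. F j) = (\<Sum>j<k. F (j + r))"
    by (simp only: sum.shift_bounds_nat_ivl lessThan_atLeast0)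
  also have "\<dots> = (if i = 0 then 0 else (\<Sum>j<k. gentry r d j (i - 1)))"
  proof (cases "i = 0")
    case True
    have "F (j + r) = 0" if "j < k" for j
      using that assms unfolding F_def True by (simp add: ncomp_neg)
    then show ?thesis using True by simp
  next
    case False
    then show ?thesis unfolding F_def gentry_def by (simp add: of_nat_diff algebra_simps)
  qed
  finally show ?thesis unfolding F_def gentry_def .
qed

lemma gentry_even_top_nonpos:
  assumes "1 \<le> r" and "d = 2 * m" and "2 * j \<le> r + d"
  shows "gentry r d j (m + 1) \<le> 0"
proof -
  have "ncomp r d ((int m + 1) * int r - int j) \<le> ncomp r d (int m * int r - int j)"
    using assms by (intro ncomp_central) (auto simp: algebra_simps abs_if)
  then show ?thesis unfolding gentry_def by (simp add: add.commute)
qed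

lemma gentry_odd_mid_nonneg:
  assumes "1 \<le> r" and "d = 2 * m + 1" and "d \<le> 2 * k"
  shows "0 \<le> gentry r d k (m + 1)"
proof -
  have "ncomp r d (int m * int r - int k) \<le> ncomp r d ((int m + 1) * int r - int k)"
    using assms by (intro ncomp_central) (auto simp: algebra_simps abs_if)
  then show ?thesis unfolding gentry_def by (simp add: add.commute)
qed

lemma gentry_odd_top_nonpos:
  assumes "1 \<le> r" and "d = 2 * m + 1" and "j \<le> r"
  shows "gentry r d j (m + 2) \<le> 0"
proof -
  have "ncomp r d ((int m + 2) * int r - int j) \<le> ncomp r d ((int m + 1) * int r - int j)"
    using assms by (intro ncomp_central) (auto simp: algebra_simps abs_if)
  then show ?thesis unfolding gentry_def by (simp add: add.commute)
qed

text \<open>For odd \<open>d = 2m + 1\<close>, symmetry makes the entries \<open>m + 1\<close> of the columns \<open>j\<close> and \<open>d - j\<close>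
  cancel, so they sum to zero over every symmetric range of columns.\<close>

lemma gentry_odd_cancel:
  assumes "1 \<le> r" and "d = 2 * m + 1"
  shows "(\<Sum>j\<in>{a..d - a}. gentry r d j (m + 1)) = 0"
proof -
  define f where "f j = gentry r d j (m + 1)" for j
  have pair: "f j + f (d - j) = 0" if "j \<le> d" for j
  proof -
    have "int d * (int r - 1) - (int m * int r - int j) = (int m + 1) * int r - int (d - j)"
      "int d * (int r - 1) - (int m * int r - int (d - j)) = (int m + 1) * int r - int j"
      using that assms(2) by (simp_all add: of_nat_diff algebra_simps)
    then have "ncomp r d (int m * int r - int j) = ncomp r d ((int m + 1) * int r - int (d - j))"
      "ncomp r d (int m * int r - int (d - j)) = ncomp r d ((int m + 1) * int r - int j)"
      using ncomp_symmetric[OF assms(1), of d] by metis+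
    then show ?thesis unfolding f_def gentry_def by (simp add: add.commute)
  qed
  have "(\<Sum>j\<in>{a..d - a}. f j) = (\<Sum>j\<in>{a..d - a}. f (d - a + a - j))"
    by (rule sum.atLeastAtMost_rev)
  also have "\<dots> = (\<Sum>j\<in>{a..d - a}. f (d - j))"
    by (intro sum.cong refl arg_cong[where f = f]) auto
  finally have "2 * (\<Sum>j\<in>{a..d - a}. f j) = (\<Sum>j\<in>{a..d - a}. f j + f (d - j))"
    by (simp add: sum.distrib)
  also have "\<dots> = 0" using pair by (intro sum.neutral) auto
  finally show ?thesis unfolding f_def by simp
qed

lemma ghat_eq_gentry:
  assumes "k < r"
  shows "ghat r d k = map (gentry r d k) [0..<d div 2 + 2]"
proof -
  have r: "1 \<le> r" using assms by simp
  have "int (Ccount (r - 1) d n) = ncomp r d n" for n by (rule Ccount_eq_ncomp[OF r])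
  then show ?thesis unfolding ghat_def gentry_def if_P[OF assms]
    using r by (intro map_cong refl) (simp add: ncomp_neg)
qed

lemma gvec_eq_gentry:
  assumes "k < r"
  shows "gvec r d k = map (gentry r d k) [0..<d div 2 + 1]"
proof -
  have "[0..<d div 2 + 2] = [0..<d div 2 + 1] @ [d div 2 + 1]" by simp
  then show ?thesis unfolding gvec_def ghat_eq_gentry[OF assms] by (simp only: map_append butlast_snoc list.map)
qed

definition is_complex :: "nat set set \<Rightarrow> bool" where
  "is_complex \<Delta> \<longleftrightarrow> finite \<Delta> \<and> (\<forall>F\<in>\<Delta>. finite F) \<and> (\<forall>F\<in>\<Delta>. \<forall>G. G \<subseteq> F \<longrightarrow> G \<in> \<Delta>)"

definition fnum :: "nat set set \<Rightarrow> nat \<Rightarrow> int" where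
  "fnum \<Delta> i = int (card {F\<in>\<Delta>. card F = i})"

text \<open>The faces added to a complex by coning over a subcomplex \<open>L\<close>: the \<open>f\<close>-vector of \<open>L\<close> shifted by one.\<close>

definition cone_fnum :: "nat set set \<Rightarrow> nat \<Rightarrow> int" where
  "cone_fnum L i = (if i = 0 then 0 else fnum L (i - 1))"

definition family_fnum :: "nat set set list \<Rightarrow> nat \<Rightarrow> int" where
  "family_fnum Ls i = (\<Sum>L\<leftarrow>Ls. cone_fnum L i)"

definition link_family :: "nat set set \<Rightarrow> nat \<Rightarrow> nat set set list \<Rightarrow> bool" where
  "link_family \<Delta> s Ls \<longleftrightarrow>
     (\<forall>L\<in>set Ls. is_complex L \<and> fnum L 0 = 1 \<and> L \<subseteq> \<Delta> \<and> (\<forall>i\<ge>s. fnum L i = 0))"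

lemma fnum_nonneg: "0 \<le> fnum \<Delta> i"
  unfolding fnum_def by simp

lemma family_fnum_nonneg: "0 \<le> family_fnum Ls i"
  unfolding family_fnum_def cone_fnum_def
  by (induction Ls) (auto intro: add_nonneg_nonneg fnum_nonneg)

lemma family_fnum_Nil [simp]: "family_fnum [] i = 0"
  and family_fnum_Cons [simp]: "family_fnum (L # Ls) i = cone_fnum L i + family_fnum Ls i"
  and family_fnum_append [simp]: "family_fnum (Ls @ Ms) i = family_fnum Ls i + family_fnum Ms i"
  unfolding family_fnum_def by simp_all

lemma family_fnum_concat_upt:
  "family_fnum (concat (map G [a..<b])) i = (\<Sum>j\<in>{a..<b}. family_fnum (G j) i)"
proof -
  have "family_fnum (concat Lss) i = (\<Sum>Ls\<leftarrow>Lss. family_fnum Ls i)" for Lss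
    by (induction Lss) auto
  then show ?thesis by (simp add: sum_set_upt_conv_sum_list_nat[symmetric] o_def)
qed

lemma fnum_mono: "is_complex \<Delta> \<Longrightarrow> L \<subseteq> \<Delta> \<Longrightarrow> fnum L i \<le> fnum \<Delta> i"
  unfolding fnum_def is_complex_def by (auto intro!: card_mono)

lemma link_family_mono:
  "link_family \<Delta> s Ls \<Longrightarrow> \<Delta> \<subseteq> \<Delta>' \<Longrightarrow> s \<le> s' \<Longrightarrow> link_family \<Delta>' s' Ls"
  unfolding link_family_def by auto

lemma link_family_vanishes: "link_family \<Delta> s Ls \<Longrightarrow> s < i \<Longrightarrow> family_fnum Ls i = 0"
  unfolding link_family_def family_fnum_def cone_fnum_def by (induction Ls) auto

lemma link_family_extend:
  assumes "is_complex L0" "fnum L0 0 = 1" "L0 \<subseteq> \<Delta>'" "\<forall>i\<ge>s. fnum L0 i = 0"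
    and "\<forall>j\<in>set js. link_family \<Delta> s (G j)" and "\<Delta> \<subseteq> \<Delta>'"
  shows "link_family \<Delta>' s (L0 # concat (map G js))"
  unfolding link_family_def
proof
  fix L assume "L \<in> set (L0 # concat (map G js))"
  then consider "L = L0" | j where "j \<in> set js" "L \<in> set (G j)" by auto
  then show "is_complex L \<and> fnum L 0 = 1 \<and> L \<subseteq> \<Delta>' \<and> (\<forall>i\<ge>s. fnum L i = 0)"
  proof cases
    case (2 j)
    then show ?thesis using assms(5,6) unfolding link_family_def by blast
  qed (use assms in simp)
qed

lemma is_fvector_fnum:
  assumes "is_complex L" "fnum L 0 = 1" "\<forall>i\<ge>n. fnum L i = 0" "1 \<le> n"
  shows "is_fvector (map (fnum L) [0..<n])"
proof -
  have "card G < n" if "G \<in> L" for G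
  proof (rule ccontr)
    assume "\<not> card G < n"
    then have "{F\<in>L. card F = card G} = {}"
      using assms(1,3) unfolding fnum_def is_complex_def by auto
    then show False using that by auto
  qed
  moreover have "hd (map (fnum L) [0..<n]) = 1" using assms(2,4) by (simp add: hd_map hd_upt)
  ultimately show ?thesis
    using assms(1,4) unfolding is_fvector_def is_complex_def fnum_def by auto
qed

definition attach_cone :: "nat set set \<Rightarrow> nat set set \<Rightarrow> nat \<Rightarrow> nat set set" where
  "attach_cone \<Phi> L v = \<Phi> \<union> insert v ` L"

lemma is_complex_attach_cone:
  assumes \<Phi>: "is_complex \<Phi>" and L: "is_complex L" "L \<subseteq> \<Phi>"
  shows "is_complex (attach_cone \<Phi> L v)"
  unfolding is_complex_def
proof (intro conjI ballI allI impI)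
  show "finite (attach_cone \<Phi> L v)" "\<And>F. F \<in> attach_cone \<Phi> L v \<Longrightarrow> finite F"
    unfolding attach_cone_def using \<Phi> L unfolding is_complex_def by auto
next
  fix F G assume F: "F \<in> attach_cone \<Phi> L v" and G: "G \<subseteq> F"
  show "G \<in> attach_cone \<Phi> L v"
  proof (cases "F \<in> \<Phi>")
    case True
    then have "G \<in> \<Phi>" using G \<Phi> unfolding is_complex_def by blast
    then show ?thesis unfolding attach_cone_def by simp
  next
    case False
    then obtain H where H: "H \<in> L" "F = insert v H" using F unfolding attach_cone_def by auto
    then have base: "G - {v} \<in> L" using G L(1) unfolding is_complex_def by blast
    show ?thesis
    proof (cases "v \<in> G")
      case True
      then have "G = insert v (G - {v})" by blast
      then have "G \<in> insert v ` L" using base by (rule image_eqI)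
      then show ?thesis unfolding attach_cone_def by simp
    next
      case False
      then show ?thesis using base L(2) unfolding attach_cone_def by auto
    qed
  qed
qed

lemma fnum_attach_cone:
  assumes \<Phi>: "is_complex \<Phi>" and L: "is_complex L" "L \<subseteq> \<Phi>" and v: "v \<notin> \<Union>\<Phi>"
  shows "fnum (attach_cone \<Phi> L v) i = fnum \<Phi> i + cone_fnum L i"
proof -
  have vL: "v \<notin> G" if "G \<in> L" for G using that L(2) v by auto
  have split: "{F\<in>attach_cone \<Phi> L v. card F = i} = {F\<in>\<Phi>. card F = i} \<union> insert v ` {G\<in>L. Suc (card G) = i}"
    using vL L(1) unfolding attach_cone_def is_complex_def by (auto simp: card_insert_if)
  have "inj_on (insert v) {G\<in>L. Suc (card G) = i}"
    unfolding inj_on_def using vL by (metis insert_ident mem_Collect_eq)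
  moreover have "finite {F\<in>\<Phi>. card F = i}" "finite {G\<in>L. Suc (card G) = i}"
    using \<Phi> L(1) unfolding is_complex_def by auto
  moreover have "{F\<in>\<Phi>. card F = i} \<inter> insert v ` {G\<in>L. Suc (card G) = i} = {}"
    using v by auto
  ultimately have "card {F\<in>attach_cone \<Phi> L v. card F = i}
      = card {F\<in>\<Phi>. card F = i} + card {G\<in>L. Suc (card G) = i}"
    unfolding split by (simp add: card_Un_disjoint card_image)
  moreover have "int (card {G\<in>L. Suc (card G) = i}) = cone_fnum L i"
    unfolding cone_fnum_def fnum_def by (cases i) auto
  ultimately show ?thesis unfolding fnum_def by simp
qed

lemma cone_over_subcomplex:
  assumes \<Phi>: "is_complex \<Phi>" and L: "is_complex L" "L \<subseteq> \<Phi>"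
  shows "\<exists>\<Phi>'. is_complex \<Phi>' \<and> \<Phi> \<subseteq> \<Phi>' \<and> (\<forall>i. fnum \<Phi>' i = fnum \<Phi> i + cone_fnum L i)"
proof -
  have "finite (\<Union>\<Phi>)" using \<Phi> unfolding is_complex_def by auto
  then obtain v :: nat where "v \<notin> \<Union>\<Phi>" using ex_new_if_finite infinite_UNIV_nat by blast
  then show ?thesis
    using is_complex_attach_cone[OF assms] fnum_attach_cone[OF assms] unfolding attach_cone_def
    by blast
qed

lemma cone_over_family:
  assumes "is_complex \<Phi>" and "\<forall>L\<in>set Ls. is_complex L \<and> L \<subseteq> \<Phi>"
  shows "\<exists>\<Phi>'. is_complex \<Phi>' \<and> \<Phi> \<subseteq> \<Phi>' \<and> (\<forall>i. fnum \<Phi>' i = fnum \<Phi> i + family_fnum Ls i)"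
  using assms(2)
proof (induction Ls)
  case Nil
  then show ?case using assms(1) by auto
next
  case (Cons L Ls)
  then obtain \<Psi> where \<Psi>: "is_complex \<Psi>" "\<Phi> \<subseteq> \<Psi>" "\<forall>i. fnum \<Psi> i = fnum \<Phi> i + family_fnum Ls i"
    by auto
  moreover obtain \<Phi>' where "is_complex \<Phi>'" "\<Psi> \<subseteq> \<Phi>'" "\<forall>i. fnum \<Phi>' i = fnum \<Psi> i + cone_fnum L i"
    using cone_over_subcomplex[OF \<Psi>(1), of L] Cons.prems \<Psi>(2) by auto
  ultimately show ?case by (intro exI[of _ \<Phi>']) auto
qed

lemma cone_chain:
  fixes r :: nat
  assumes \<Delta>: "is_complex \<Delta>" and E: "\<forall>j\<in>{1..<r}. \<forall>L\<in>set (E j). is_complex L \<and> L \<subseteq> \<Delta>"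
  shows "\<exists>\<Phi>. \<forall>k\<in>{1..r}. is_complex (\<Phi> k) \<and> \<Delta> \<subseteq> \<Phi> k \<and> \<Phi> k \<subseteq> \<Phi> r \<and>
           (\<forall>i. fnum (\<Phi> k) i = fnum \<Delta> i + (\<Sum>j\<in>{1..<k}. family_fnum (E j) i))"
  using E
proof (induction r)
  case (Suc r)
  show ?case
  proof (cases "r = 0")
    case True
    then show ?thesis using \<Delta> by (intro exI[of _ "\<lambda>_. \<Delta>"]) auto
  next
    case False
    then have r: "r \<in> {1..r}" by simp
    have "\<forall>j\<in>{1..<r}. \<forall>L\<in>set (E j). is_complex L \<and> L \<subseteq> \<Delta>"
      using Suc.prems by (meson atLeastLessThan_iff less_SucI)
    then obtain \<Phi> where \<Phi>: "\<forall>k\<in>{1..r}. is_complex (\<Phi> k) \<and> \<Delta> \<subseteq> \<Phi> k \<and> \<Phi> k \<subseteq> \<Phi> r \<and>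
        (\<forall>i. fnum (\<Phi> k) i = fnum \<Delta> i + (\<Sum>j\<in>{1..<k}. family_fnum (E j) i))"
      using Suc.IH by blast
    have "\<forall>L\<in>set (E r). is_complex L \<and> L \<subseteq> \<Phi> r"
      using Suc.prems \<Phi> r False by fastforce
    then obtain \<Psi> where \<Psi>: "is_complex \<Psi>" "\<Phi> r \<subseteq> \<Psi>" "\<forall>i. fnum \<Psi> i = fnum (\<Phi> r) i + family_fnum (E r) i"
      using cone_over_family[of "\<Phi> r" "E r"] \<Phi> r by blast
    define \<Phi>' where "\<Phi>' = \<Phi>(Suc r := \<Psi>)"
    have "is_complex (\<Phi>' k) \<and> \<Delta> \<subseteq> \<Phi>' k \<and> \<Phi>' k \<subseteq> \<Phi>' (Suc r) \<and>
        (\<forall>i. fnum (\<Phi>' k) i = fnum \<Delta> i + (\<Sum>j\<in>{1..<k}. family_fnum (E j) i))"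
      if k: "k \<in> {1..Suc r}" for k
    proof (cases "k = Suc r")
      case True
      have "(\<Sum>j\<in>{1..<Suc r}. family_fnum (E j) i) = (\<Sum>j\<in>{1..<r}. family_fnum (E j) i) + family_fnum (E r) i"
        for i using False by simp
      then show ?thesis using \<Phi> r \<Psi> True unfolding \<Phi>'_def by fastforce
    next
      case False
      then show ?thesis using \<Phi> \<Psi>(2) k unfolding \<Phi>'_def by fastforce
    qed
    then show ?thesis by blast
  qed
qed simp

lemma truncation:
  assumes \<Phi>: "is_complex \<Phi>" and t: "0 \<le> t" "t \<le> fnum \<Phi> s"
  shows "\<exists>L. is_complex L \<and> L \<subseteq> \<Phi> \<and>
           (\<forall>i. fnum L i = (if i < s then fnum \<Phi> i else if i = s then t else 0))"
proof -
  have fin: "finite {F\<in>\<Phi>. card F = s}" and finF: "\<forall>F\<in>\<Phi>. finite F"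
    using \<Phi> unfolding is_complex_def by auto
  have "nat t \<le> card {F\<in>\<Phi>. card F = s}" using t unfolding fnum_def by simp
  then obtain X where X: "X \<subseteq> {F\<in>\<Phi>. card F = s}" "card X = nat t"
    by (meson obtain_subset_with_card_n)
  define L where "L = {F\<in>\<Phi>. card F < s} \<union> X"
  have "is_complex L"
    unfolding is_complex_def
  proof (intro conjI ballI allI impI)
    show "finite L" unfolding L_def using \<Phi> X fin unfolding is_complex_def by (auto intro: finite_subset)
    show "\<And>F. F \<in> L \<Longrightarrow> finite F" unfolding L_def using X finF by auto
  next
    fix F G assume F: "F \<in> L" and G: "G \<subseteq> F"
    have FP: "F \<in> \<Phi>" "card F \<le> s" using F X unfolding L_def by auto
    then have "G \<in> \<Phi>" using G \<Phi> unfolding is_complex_def by blast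
    moreover have "G = F \<or> card G < card F"
      using G FP finF by (meson psubsetI psubset_card_mono)
    ultimately show "G \<in> L" using F FP unfolding L_def by auto
  qed
  moreover have "L \<subseteq> \<Phi>" unfolding L_def using X by auto
  moreover have "fnum L i = (if i < s then fnum \<Phi> i else if i = s then t else 0)" for i
  proof -
    have "{F\<in>L. card F = i} = (if i < s then {F\<in>\<Phi>. card F = i} else if i = s then X else {})"
      unfolding L_def using X by auto
    then show ?thesis unfolding fnum_def using X t by simp
  qed
  ultimately show ?thesis by blast
qed

lemma vadd_map_upt: "vadd (map f [0..<n]) (map g [0..<n]) = map (\<lambda>i. f i + g i) [0..<n]"
  by (simp add: vadd_def list_eq_iff_nth_eq)

lemma vsum_cone_vectors:
  "vsum n (map (\<lambda>L. map (cone_fnum L) [0..<n]) Ls) = map (family_fnum Ls) [0..<n]"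
proof (induction Ls)
  case Nil
  then show ?case by (simp add: vsum_def list_eq_iff_nth_eq)
next
  case (Cons L Ls)
  then show ?case by (simp add: vsum_def vadd_map_upt)
qed

lemma basic_admissible_cone:
  assumes "is_complex L" "fnum L 0 = 1" "L \<subseteq> \<Delta>" "\<forall>i\<ge>n - 1. fnum L i = 0"
    and "is_complex \<Delta>" "2 \<le> n" and "\<forall>i. fnum \<Delta> i \<le> g i"
  shows "basic_admissible (map g [0..<n]) (map (cone_fnum L) [0..<n])"
  unfolding basic_admissible_def
proof (intro conjI allI impI)
  have "drop 1 (map (cone_fnum L) [0..<n]) = map (fnum L) [0..<n - 1]"
    by (simp add: list_eq_iff_nth_eq cone_fnum_def)
  then show "is_fvector (drop 1 (map (cone_fnum L) [0..<n]))"
    using is_fvector_fnum[of L "n - 1"] assms(1,2,4,6) by simp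
next
  fix j assume j: "2 \<le> j \<and> j < length (map g [0..<n])"
  then have "cone_fnum L j \<le> g (j - 1)"
    using fnum_mono[OF assms(5,3), of "j - 1"] assms(7)[rule_format, of "j - 1"]
    unfolding cone_fnum_def by simp
  moreover have "j - 1 < n" "j < n" using j by auto
  ultimately show "map (cone_fnum L) [0..<n] ! j \<le> map g [0..<n] ! (j - 1)"
    by (simp only: nth_map_upt) simp
qed (use assms in \<open>simp_all add: cone_fnum_def\<close>)

text \<open>The total shifted \<open>f\<close>-vector of a family of subcomplexes of \<open>\<Delta>\<close> is admissible for the
  \<open>f\<close>-vector of \<open>\<Delta>\<close>: add the cone vectors one at a time.\<close>

lemma admissible_family:
  assumes \<Delta>: "is_complex \<Delta>" and n: "2 \<le> n" and Ls: "link_family \<Delta> (n - 1) Ls"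
  shows "admissible (map (fnum \<Delta>) [0..<n]) (map (family_fnum Ls) [0..<n])"
  unfolding admissible_def
proof (intro exI[of _ "map (\<lambda>L. map (cone_fnum L) [0..<n]) Ls"] conjI allI impI)
  show "map (family_fnum Ls) [0..<n] = vsum (length (map (fnum \<Delta>) [0..<n])) (map (\<lambda>L. map (cone_fnum L) [0..<n]) Ls)"
    by (simp add: vsum_cone_vectors)
next
  fix j assume j: "j < length (map (\<lambda>L. map (cone_fnum L) [0..<n]) Ls)"
  have "vadd (map (fnum \<Delta>) [0..<n]) (vsum (length (map (fnum \<Delta>) [0..<n]))
          (take j (map (\<lambda>L. map (cone_fnum L) [0..<n]) Ls)))
      = map (\<lambda>i. fnum \<Delta> i + family_fnum (take j Ls) i) [0..<n]"
    by (simp add: take_map vsum_cone_vectors vadd_map_upt)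
  moreover have "basic_admissible (map (\<lambda>i. fnum \<Delta> i + family_fnum (take j Ls) i) [0..<n])
                   (map (cone_fnum (Ls ! j)) [0..<n])"
    using Ls j by (intro basic_admissible_cone[OF _ _ _ _ \<Delta> n])
      (auto simp: link_family_def family_fnum_nonneg)
  ultimately show "basic_admissible (vadd (map (fnum \<Delta>) [0..<n]) (vsum (length (map (fnum \<Delta>) [0..<n]))
          (take j (map (\<lambda>L. map (cone_fnum L) [0..<n]) Ls)))) (map (\<lambda>L. map (cone_fnum L) [0..<n]) Ls ! j)"
    using j by simp
qed

text \<open>\<open>Ls\<close> realizes \<open>h\<close> up to entry \<open>s\<close> (and, by the size bound, vanishes beyond \<open>s\<close>).\<close>

definition realizes :: "nat set set \<Rightarrow> nat \<Rightarrow> nat set set list \<Rightarrow> (nat \<Rightarrow> int) \<Rightarrow> bool" where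
  "realizes \<Delta> s Ls h \<longleftrightarrow> link_family \<Delta> s Ls \<and> (\<forall>i\<le>s. family_fnum Ls i = h i)"

text \<open>For odd \<open>d\<close> the columns
  \<open>k > m\<close> are realized including the entry \<open>m + 1\<close> (this is part (iii)); for even \<open>d\<close> the columns
  \<open>k \<ge> d\<close> are realized with any entry \<open>m + 1\<close> between \<open>0\<close> and its true value, which the next odd
  step needs.\<close>

definition realizable :: "nat \<Rightarrow> nat \<Rightarrow> bool" where
  "realizable r d \<longleftrightarrow> (\<exists>\<Delta>. is_complex \<Delta> \<and>
     (\<forall>i. fnum \<Delta> i = (if i \<le> d div 2 then gentry r d 0 i else 0)) \<and>
     (\<forall>k. 1 \<le> k \<and> k < r \<longrightarrow> (\<exists>Ls. realizes \<Delta> (d div 2) Ls (gentry r d k))) \<and>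
     (odd d \<longrightarrow> (\<forall>k. d div 2 < k \<and> k < r \<longrightarrow> (\<exists>Ls. realizes \<Delta> (d div 2 + 1) Ls (gentry r d k)))) \<and>
     (even d \<longrightarrow> (\<forall>k t. d \<le> k \<and> k < r \<and> 0 \<le> t \<and> t \<le> gentry r d k (d div 2 + 1) \<longrightarrow>
        (\<exists>Ls. realizes \<Delta> (d div 2 + 1) Ls ((gentry r d k)(d div 2 + 1 := t))))))"

lemma fnum_singleton_empty: "fnum {{}} i = (if i = 0 then 1 else 0)"
proof -
  have faces: "{F\<in>{{}}. card F = i} = (if i = 0 then {{}} else {})" by auto
  show ?thesis unfolding fnum_def faces by simp
qed

lemma realizable_1:
  assumes r: "1 \<le> r"
  shows "realizable r 1"
proof -
  have cplx: "is_complex {{}}" unfolding is_complex_def by auto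
  have top: "gentry r 1 k 1 = 1" if "1 \<le> k" "k < r" for k
  proof -
    have "gentry r 1 k 1 = (\<Sum>j<r. if int r - int k = int j then 1 else 0)"
      using that unfolding gentry_def by (simp add: ncomp_neg)
    also have "\<dots> = (\<Sum>j<r. if j = r - k then 1 else 0)"
      using that by (intro sum.cong) auto
    finally show ?thesis using that by simp
  qed
  have "realizes {{}} 1 [{{}}] (gentry r 1 k)" if "0 < k" "k < r" for k
    unfolding realizes_def link_family_def
    using cplx top that gentry_at_0[of k]
    by (auto simp: fnum_singleton_empty cone_fnum_def le_Suc_eq)
  moreover have "realizes {{}} 0 [] (gentry r 1 k)" if "0 < k" for k
    unfolding realizes_def link_family_def using gentry_at_0[of k] that by simp
  ultimately show ?thesis
    unfolding realizable_def using cplx gentry_0_0[OF r]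
    by (intro exI[of _ "{{}}"]) (auto simp: fnum_singleton_empty Suc_le_eq)
qed

lemma realizes_lift:
  assumes "realizes \<Delta> s Ls h"
  shows "realizes \<Delta> (s + 1) Ls (h(s + 1 := 0))"
  using assms link_family_vanishes[of \<Delta> s Ls "s + 1"] link_family_mono[of \<Delta> s Ls \<Delta> "s + 1"]
  unfolding realizes_def by (auto simp: le_Suc_eq)

lemma realizes_sum_above:
  assumes "\<forall>j\<in>J. realizes \<Delta> s (E j) (h j)" and "s \<le> i"
  shows "(\<Sum>j\<in>J. family_fnum (E j) i) = (if i = s then (\<Sum>j\<in>J. h j s) else 0)"
proof (cases "i = s")
  case True
  then show ?thesis using assms(1) unfolding realizes_def by (simp cong: sum.cong)
next
  case False
  then have "family_fnum (E j) i = 0" if "j \<in> J" for j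
    using assms that link_family_vanishes unfolding realizes_def by force
  then show ?thesis using False by simp
qed

lemma extended_family_realizes:
  assumes L0: "is_complex L0" "fnum L0 0 = 1" "L0 \<subseteq> \<Delta>'" "\<forall>i\<ge>s. fnum L0 i = 0"
    and G: "\<forall>j\<in>{k..<r}. realizes \<Delta> s (G j) (g j)" and "\<Delta> \<subseteq> \<Delta>'"
    and h: "\<forall>i\<le>s. h i = cone_fnum L0 i + (\<Sum>j\<in>{k..<r}. g j i)"
  shows "realizes \<Delta>' s (L0 # concat (map G [k..<r])) h"
  unfolding realizes_def
proof (intro conjI allI impI)
  show "link_family \<Delta>' s (L0 # concat (map G [k..<r]))"
    using G by (intro link_family_extend[OF L0 _ \<open>\<Delta> \<subseteq> \<Delta>'\<close>]) (simp add: realizes_def)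
next
  fix i assume "i \<le> s"
  then show "family_fnum (L0 # concat (map G [k..<r])) i = h i"
    using G h by (simp add: family_fnum_concat_upt realizes_def)
qed

lemma gentry_Suc_cone:
  assumes "k \<le> r" and "0 < i \<Longrightarrow> fnum L0 (i - 1) = (\<Sum>j<k. gentry r d j (i - 1))"
  shows "gentry r (Suc d) k i = cone_fnum L0 i + (\<Sum>j\<in>{k..<r}. gentry r d j i)"
  using assms by (simp add: gentry_Suc cone_fnum_def)

lemma cone_chain_columns:
  fixes r :: nat and E :: "nat \<Rightarrow> nat set set list"
  assumes \<Delta>: "is_complex \<Delta>" and f\<Delta>: "\<forall>i. fnum \<Delta> i = (if i \<le> m then gentry r d 0 i else 0)"
    and E: "\<forall>j\<in>{1..<r}. realizes \<Delta> s (E j) (h j)" and h: "\<forall>j\<in>{1..<r}. \<forall>i\<le>m. h j i = gentry r d j i"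
    and s: "m \<le> s" "s \<le> m + 1"
  shows "\<exists>\<Phi>. \<forall>k\<in>{1..r}. is_complex (\<Phi> k) \<and> \<Delta> \<subseteq> \<Phi> k \<and> \<Phi> k \<subseteq> \<Phi> r \<and>
           (\<forall>i. fnum (\<Phi> k) i = (if i \<le> m then (\<Sum>j<k. gentry r d j i)
                                  else if i = s then (\<Sum>j\<in>{1..<k}. h j s) else 0))"
proof -
  have "\<forall>j\<in>{1..<r}. \<forall>L\<in>set (E j). is_complex L \<and> L \<subseteq> \<Delta>"
    using E unfolding realizes_def link_family_def by blast
  from cone_chain[OF \<Delta> this] obtain \<Phi> where \<Phi>: "\<forall>k\<in>{1..r}. is_complex (\<Phi> k) \<and> \<Delta> \<subseteq> \<Phi> k \<and> \<Phi> k \<subseteq> \<Phi> r \<and>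
      (\<forall>i. fnum (\<Phi> k) i = fnum \<Delta> i + (\<Sum>j\<in>{1..<k}. family_fnum (E j) i))"
    by blast
  have "fnum \<Delta> i + (\<Sum>j\<in>{1..<k}. family_fnum (E j) i)
      = (if i \<le> m then (\<Sum>j<k. gentry r d j i) else if i = s then (\<Sum>j\<in>{1..<k}. h j s) else 0)"
    if k: "k \<in> {1..r}" for k i
  proof (cases "i \<le> m")
    case True
    have "(\<Sum>j\<in>{1..<k}. family_fnum (E j) i) = (\<Sum>j\<in>{1..<k}. gentry r d j i)"
      using E h k True s unfolding realizes_def by (intro sum.cong) auto
    moreover have "(\<Sum>j<k. gentry r d j i) = gentry r d 0 i + (\<Sum>j\<in>{1..<k}. gentry r d j i)"
      using k by (simp add: lessThan_atLeast0 sum.atLeast_Suc_lessThan)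
    ultimately show ?thesis using f\<Delta> True by simp
  next
    case False
    have "\<forall>j\<in>{1..<k}. realizes \<Delta> s (E j) (h j)" using E k by simp
    then show ?thesis using realizes_sum_above[of "{1..<k}" \<Delta> s E h i] f\<Delta> False s by simp
  qed
  with \<Phi> show ?thesis by (intro exI[of _ \<Phi>] ballI) (simp only:, blast)
qed

lemma split_budget:
  fixes c :: "nat \<Rightarrow> int"
  assumes "finite J" and "\<forall>j\<in>J. 0 \<le> c j" and "0 \<le> R" and "R \<le> (\<Sum>j\<in>J. c j)"
  shows "\<exists>t. (\<forall>j\<in>J. 0 \<le> t j \<and> t j \<le> c j) \<and> (\<Sum>j\<in>J. t j) = R"
  using assms
proof (induction J arbitrary: R rule: finite_induct)
  case empty
  then show ?case by auto
next
  case (insert x J)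
  define R' where "R' = min R (\<Sum>j\<in>J. c j)"
  have "0 \<le> (\<Sum>j\<in>J. c j)" using insert.prems by (auto intro: sum_nonneg)
  then have "0 \<le> R'" "R' \<le> (\<Sum>j\<in>J. c j)" unfolding R'_def using insert.prems by auto
  then obtain t where t: "\<forall>j\<in>J. 0 \<le> t j \<and> t j \<le> c j" "(\<Sum>j\<in>J. t j) = R'"
    using insert.IH insert.prems(1) by auto
  have "(\<Sum>j\<in>J. (t(x := R - R')) j) = R'"
    using t(2) insert.hyps(2) by (metis (no_types, lifting) fun_upd_other sum.cong)
  moreover have "0 \<le> R - R'" "R - R' \<le> c x" using insert.prems insert.hyps unfolding R'_def by auto
  ultimately show ?case using t insert.hyps by (intro exI[of _ "t(x := R - R')"]) auto
qed

lemma sum_if_cancelled: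
  fixes f :: "nat \<Rightarrow> int"
  assumes "finite A" and "K \<subseteq> A" and "(\<Sum>j\<in>K. f j) = 0"
  shows "(\<Sum>j\<in>A. if j \<in> K then 0 else f j) = (\<Sum>j\<in>A. f j)"
proof -
  have "(\<Sum>j\<in>A. f j) = (\<Sum>j\<in>A. (if j \<in> K then 0 else f j) + (if j \<in> K then f j else 0))"
    by (rule sum.cong) auto
  also have "\<dots> = (\<Sum>j\<in>A. if j \<in> K then 0 else f j) + (\<Sum>j\<in>A \<inter> K. f j)"
    using assms(1) by (simp add: sum.distrib sum.inter_restrict)
  finally show ?thesis using assms by (simp add: Int_absorb1)
qed

context
  fixes r m d :: nat and \<Delta> :: "nat set set" and \<Phi> :: "nat \<Rightarrow> nat set set"
    and B :: "nat \<Rightarrow> nat set set list" and C :: "nat \<Rightarrow> int \<Rightarrow> nat set set list"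
  assumes r: "1 \<le> r" and d: "d = 2 * m" and m: "1 \<le> m" and dr: "d < r"
    and B: "\<And>k. 1 \<le> k \<Longrightarrow> k < r \<Longrightarrow> realizes \<Delta> m (B k) (gentry r d k)"
    and C: "\<And>k t. d \<le> k \<Longrightarrow> k < r \<Longrightarrow> 0 \<le> t \<Longrightarrow> t \<le> gentry r d k (m + 1) \<Longrightarrow>
              realizes \<Delta> (m + 1) (C k t) ((gentry r d k)(m + 1 := t))"
    and \<Phi>: "\<And>k. k \<in> {1..r} \<Longrightarrow> is_complex (\<Phi> k) \<and> \<Delta> \<subseteq> \<Phi> k \<and> \<Phi> k \<subseteq> \<Phi> r \<and>
              (\<forall>i. fnum (\<Phi> k) i = (if i \<le> m then (\<Sum>j<k. gentry r d j i) else 0))"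
begin

lemma even_step_complex: "fnum (\<Phi> r) i = (if i \<le> m then gentry r (Suc d) 0 i else 0)"
  using \<Phi>[of r] r gentry_Suc[of 0 r d i] by (simp add: lessThan_atLeast0)

text \<open>Column \<open>k\<close> of \<open>d + 1\<close> up to entry \<open>m\<close>: the faces of \<open>\<Phi> k\<close> with fewer than \<open>m\<close> vertices give the
  shifted columns \<open>j < k\<close>, the families \<open>B j\<close> with \<open>j \<ge> k\<close> give the others.\<close>

lemma even_step_low:
  assumes k: "1 \<le> k" "k < r"
  shows "\<exists>Ls. realizes (\<Phi> r) m Ls (gentry r (Suc d) k)"
proof -
  have \<Phi>k: "is_complex (\<Phi> k)" "\<Delta> \<subseteq> \<Phi> k" "\<Phi> k \<subseteq> \<Phi> r"
    "\<forall>i. fnum (\<Phi> k) i = (if i \<le> m then (\<Sum>j<k. gentry r d j i) else 0)"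
    using \<Phi>[of k] k by auto
  obtain L0 where L0: "is_complex L0" "L0 \<subseteq> \<Phi> k" "\<forall>i. fnum L0 i = (if i < m then fnum (\<Phi> k) i else 0)"
    using truncation[OF \<Phi>k(1), of 0 m] fnum_nonneg by auto
  have L00: "fnum L0 0 = 1" using L0(3) \<Phi>k(4) m gentry_column_0[OF r k(1)] by simp
  have fam: "\<forall>j\<in>{k..<r}. realizes \<Delta> m (B j) (gentry r d j)" using B k by simp
  have "\<forall>i\<le>m. gentry r (Suc d) k i = cone_fnum L0 i + (\<Sum>j\<in>{k..<r}. gentry r d j i)"
    using L0(3) \<Phi>k(4) k by (intro allI impI gentry_Suc_cone) auto
  then have "realizes (\<Phi> r) m (L0 # concat (map B [k..<r])) (gentry r (Suc d) k)"
    using L0 \<Phi>k by (intro extended_family_realizes[OF L0(1) L00 _ _ fam]) auto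
  then show ?thesis ..
qed

text \<open>Splitting the new top entry \<open>m + 1\<close> of column \<open>k > m\<close> (nonnegative by unimodality): a part
  \<open>top\<close> is taken from the faces of \<open>\<Phi> k\<close> with \<open>m\<close> vertices, the rest from the families \<open>C j t_j\<close> of
  columns \<open>j \<ge> d\<close> with nonnegative top entry; the remaining columns have nonpositive top entry.\<close>

lemma even_step_budget:
  assumes k: "m < k" "k < r"
  obtains top t where "0 \<le> top" "top \<le> (\<Sum>j<k. gentry r d j m)"
    and "\<forall>j\<in>{k..<r}. t j = 0 \<or> (d \<le> j \<and> 0 \<le> t j \<and> t j \<le> gentry r d j (m + 1))"
    and "top + (\<Sum>j\<in>{k..<r}. t j) = gentry r (Suc d) k (m + 1)"
proof -
  define c where "c j = (if d \<le> j then max 0 (gentry r d j (m + 1)) else 0)" for j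
  define T where "T = gentry r (Suc d) k (m + 1)"
  define P where "P = (\<Sum>j\<in>{k..<r}. c j)"
  have "fnum (\<Phi> k) m = (\<Sum>j<k. gentry r d j m)" using \<Phi>[of k] k by simp
  then have F: "0 \<le> (\<Sum>j<k. gentry r d j m)" using fnum_nonneg[of "\<Phi> k" m] by simp
  have low: "(\<Sum>j\<in>{k..<r}. gentry r d j (m + 1)) \<le> P"
    unfolding P_def
  proof (rule sum_mono)
    fix j assume "j \<in> {k..<r}"
    then have "2 * j \<le> r + d \<or> d \<le> j" using dr by auto
    then show "gentry r d j (m + 1) \<le> c j"
      using gentry_even_top_nonpos[OF r d, of j] unfolding c_def by auto
  qed
  have T: "T = (\<Sum>j\<in>{k..<r}. gentry r d j (m + 1)) + (\<Sum>j<k. gentry r d j m)"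
    unfolding T_def using gentry_Suc[of k r d "m + 1"] k by simp
  have "Suc d = 2 * m + 1" "Suc d \<le> 2 * k" using d k by simp_all
  then have "0 \<le> T" unfolding T_def by (rule gentry_odd_mid_nonneg[OF r])
  have c: "\<forall>j\<in>{k..<r}. 0 \<le> c j" unfolding c_def by simp
  have "0 \<le> P" unfolding P_def using c by (intro sum_nonneg) blast
  then have "0 \<le> min T P" "min T P \<le> P" using \<open>0 \<le> T\<close> by simp_all
  then obtain t where t: "\<forall>j\<in>{k..<r}. 0 \<le> t j \<and> t j \<le> c j" "(\<Sum>j\<in>{k..<r}. t j) = min T P"
    using split_budget[OF finite_atLeastLessThan c] unfolding P_def by blast
  show ?thesis
  proof
    show "0 \<le> max 0 (T - P)" by simp
    show "max 0 (T - P) \<le> (\<Sum>j<k. gentry r d j m)" using F T low by linarith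
    show "\<forall>j\<in>{k..<r}. t j = 0 \<or> (d \<le> j \<and> 0 \<le> t j \<and> t j \<le> gentry r d j (m + 1))"
    proof
      fix j assume "j \<in> {k..<r}"
      then have "0 \<le> t j" "t j \<le> c j" using t(1) by auto
      then show "t j = 0 \<or> (d \<le> j \<and> 0 \<le> t j \<and> t j \<le> gentry r d j (m + 1))"
        unfolding c_def by (cases "d \<le> j") (simp_all add: max_def split: if_splits)
    qed
    show "max 0 (T - P) + (\<Sum>j\<in>{k..<r}. t j) = gentry r (Suc d) k (m + 1)"
      using t(2) unfolding T_def by linarith
  qed
qed

lemma even_step_families:
  assumes k: "m < k" and t: "\<forall>j\<in>{k..<r}. t j = 0 \<or> (d \<le> j \<and> 0 \<le> t j \<and> t j \<le> gentry r d j (m + 1))"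
  shows "\<exists>E. \<forall>j\<in>{k..<r}. realizes \<Delta> (m + 1) (E j) ((gentry r d j)(m + 1 := t j))"
proof -
  define E where "E j = (if t j = 0 then B j else C j (t j))" for j
  have "\<forall>j\<in>{k..<r}. realizes \<Delta> (m + 1) (E j) ((gentry r d j)(m + 1 := t j))"
  proof
    fix j assume j: "j \<in> {k..<r}"
    show "realizes \<Delta> (m + 1) (E j) ((gentry r d j)(m + 1 := t j))"
    proof (cases "t j = 0")
      case True
      then show ?thesis using realizes_lift[OF B[of j]] j k unfolding E_def by simp
    next
      case False
      then show ?thesis using C[of j "t j"] t j unfolding E_def by auto
    qed
  qed
  then show ?thesis by blast
qed

lemma even_step_high:
  assumes k: "m < k" "k < r"
  shows "\<exists>Ls. realizes (\<Phi> r) (m + 1) Ls (gentry r (Suc d) k)"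
proof -
  have \<Phi>k: "is_complex (\<Phi> k)" "\<Delta> \<subseteq> \<Phi> k" "\<Phi> k \<subseteq> \<Phi> r"
    "\<forall>i. fnum (\<Phi> k) i = (if i \<le> m then (\<Sum>j<k. gentry r d j i) else 0)"
    using \<Phi>[of k] k by auto
  obtain top t where top: "0 \<le> top" "top \<le> (\<Sum>j<k. gentry r d j m)"
    and t: "\<forall>j\<in>{k..<r}. t j = 0 \<or> (d \<le> j \<and> 0 \<le> t j \<and> t j \<le> gentry r d j (m + 1))"
    and sum: "top + (\<Sum>j\<in>{k..<r}. t j) = gentry r (Suc d) k (m + 1)"
    using even_step_budget[OF k] by blast
  obtain L0 where L0: "is_complex L0" "L0 \<subseteq> \<Phi> k"
    "\<forall>i. fnum L0 i = (if i < m then fnum (\<Phi> k) i else if i = m then top else 0)"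
    using truncation[OF \<Phi>k(1) top(1), of m] top(2) \<Phi>k(4) by auto
  have L00: "fnum L0 0 = 1" using L0(3) \<Phi>k(4) m gentry_column_0[OF r] k by simp
  obtain E where E: "\<forall>j\<in>{k..<r}. realizes \<Delta> (m + 1) (E j) ((gentry r d j)(m + 1 := t j))"
    using even_step_families[OF k(1) t] by blast
  have "\<forall>i\<le>m + 1. gentry r (Suc d) k i = cone_fnum L0 i + (\<Sum>j\<in>{k..<r}. ((gentry r d j)(m + 1 := t j)) i)"
  proof (intro allI impI)
    fix i assume "i \<le> m + 1"
    then consider "i \<le> m" | "i = m + 1" by linarith
    then show "gentry r (Suc d) k i = cone_fnum L0 i + (\<Sum>j\<in>{k..<r}. ((gentry r d j)(m + 1 := t j)) i)"
    proof cases
      case 1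
      then show ?thesis using L0(3) \<Phi>k(4) k by (simp add: gentry_Suc_cone[of k r])
    next
      case 2
      then show ?thesis using sum L0(3) by (simp add: cone_fnum_def)
    qed
  qed
  then have "realizes (\<Phi> r) (m + 1) (L0 # concat (map E [k..<r])) (gentry r (Suc d) k)"
    using L0 \<Phi>k by (intro extended_family_realizes[OF L0(1) L00 _ _ E]) auto
  then show ?thesis ..
qed

end

lemma realizable_even_step:
  assumes r: "1 \<le> r" and d: "d = 2 * m" and m: "1 \<le> m" and dr: "d < r"
    and hyp: "realizable r d"
  shows "realizable r (Suc d)"
proof -
  have half: "d div 2 = m" "Suc d div 2 = m" "even d" "odd (Suc d)" using d by simp_all
  obtain \<Delta> where \<Delta>: "is_complex \<Delta>" "\<forall>i. fnum \<Delta> i = (if i \<le> m then gentry r d 0 i else 0)"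
    and Bex: "\<forall>k. 1 \<le> k \<and> k < r \<longrightarrow> (\<exists>Ls. realizes \<Delta> m Ls (gentry r d k))"
    and Cex: "\<forall>k t. d \<le> k \<and> k < r \<and> 0 \<le> t \<and> t \<le> gentry r d k (m + 1) \<longrightarrow>
                (\<exists>Ls. realizes \<Delta> (m + 1) Ls ((gentry r d k)(m + 1 := t)))"
    using hyp half unfolding realizable_def by auto
  obtain B where B: "\<And>k. 1 \<le> k \<Longrightarrow> k < r \<Longrightarrow> realizes \<Delta> m (B k) (gentry r d k)"
    using Bex by metis
  obtain C where C: "\<And>k t. d \<le> k \<Longrightarrow> k < r \<Longrightarrow> 0 \<le> t \<Longrightarrow> t \<le> gentry r d k (m + 1) \<Longrightarrow>
      realizes \<Delta> (m + 1) (C k t) ((gentry r d k)(m + 1 := t))"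
    using Cex by metis
  have "\<forall>j\<in>{1..<r}. realizes \<Delta> m (B j) (gentry r d j)" using B by simp
  from cone_chain_columns[OF \<Delta> this] obtain \<Phi> where \<Phi>: "\<forall>k\<in>{1..r}. is_complex (\<Phi> k) \<and> \<Delta> \<subseteq> \<Phi> k \<and>
      \<Phi> k \<subseteq> \<Phi> r \<and> (\<forall>i. fnum (\<Phi> k) i = (if i \<le> m then (\<Sum>j<k. gentry r d j i)
                                            else if i = m then (\<Sum>j\<in>{1..<k}. gentry r d j m) else 0))"
    by auto
  then have \<Phi>': "\<And>k. k \<in> {1..r} \<Longrightarrow> is_complex (\<Phi> k) \<and> \<Delta> \<subseteq> \<Phi> k \<and> \<Phi> k \<subseteq> \<Phi> r \<and>
      (\<forall>i. fnum (\<Phi> k) i = (if i \<le> m then (\<Sum>j<k. gentry r d j i) else 0))"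
    by auto
  note step = r d m dr B C \<Phi>'
  show ?thesis
    unfolding realizable_def half
    using even_step_complex[OF step] even_step_low[OF step] even_step_high[OF step] \<Phi>'[of r] r half
    by (intro exI[of _ "\<Phi> r"]) auto
qed

lemma gentry_odd_column_top:
  assumes "1 \<le> r" and "d = 2 * m + 1" and "d < k"
  shows "(\<Sum>j\<in>{Suc d..<k}. gentry r d j (m + 1)) = (\<Sum>j<k. gentry r d j (m + 1))"
proof -
  have "(\<Sum>j\<in>{0..<Suc d}. gentry r d j (m + 1)) + (\<Sum>j\<in>{Suc d..<k}. gentry r d j (m + 1))
      = (\<Sum>j<k. gentry r d j (m + 1))"
    unfolding lessThan_atLeast0 using assms(3) by (intro sum.atLeastLessThan_concat) auto
  moreover have "(\<Sum>j\<in>{0..<Suc d}. gentry r d j (m + 1)) = 0"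
    using gentry_odd_cancel[OF assms(1,2), of 0] by (simp add: atLeastLessThanSuc_atLeastAtMost)
  ultimately show ?thesis by simp
qed

lemma gentry_Suc_odd_middle:
  assumes "1 \<le> r" and "d = 2 * m + 1" and "d < r" and "k \<le> r"
  shows "gentry r (Suc d) k (m + 1)
       = (\<Sum>j<k. gentry r d j m) + (\<Sum>j\<in>{k..<r}. if j \<in> {k..d - k} then 0 else gentry r d j (m + 1))"
proof -
  have "(\<Sum>j\<in>{k..<r}. if j \<in> {k..d - k} then 0 else gentry r d j (m + 1))
      = (\<Sum>j\<in>{k..<r}. gentry r d j (m + 1))"
    using assms(3) gentry_odd_cancel[OF assms(1,2)] by (intro sum_if_cancelled) auto
  then show ?thesis using gentry_Suc[OF assms(4), of d "m + 1"] by simp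
qed

text \<open>Here \<open>B k\<close> and \<open>C k\<close> realize column \<open>k\<close> of \<open>\<Delta>\<close> without
  and with the entry \<open>m + 1\<close>, and \<open>\<Phi>\<close> is the chain of cones over \<open>B j\<close> for \<open>j \<le> d\<close> and \<open>C j\<close>
  for \<open>j > d\<close>.\<close>

context
  fixes r m d :: nat and \<Delta> :: "nat set set" and \<Phi> :: "nat \<Rightarrow> nat set set"
    and B C :: "nat \<Rightarrow> nat set set list"
  assumes r: "1 \<le> r" and d: "d = 2 * m + 1" and dr: "d < r"
    and B: "\<And>k. 1 \<le> k \<Longrightarrow> k < r \<Longrightarrow> realizes \<Delta> m (B k) (gentry r d k)"
    and C: "\<And>k. m < k \<Longrightarrow> k < r \<Longrightarrow> realizes \<Delta> (m + 1) (C k) (gentry r d k)"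
    and \<Phi>: "\<And>k. k \<in> {1..r} \<Longrightarrow> is_complex (\<Phi> k) \<and> \<Delta> \<subseteq> \<Phi> k \<and> \<Phi> k \<subseteq> \<Phi> r \<and>
              (\<forall>i. fnum (\<Phi> k) i = (if i \<le> m then (\<Sum>j<k. gentry r d j i)
                 else if i = m + 1 then (\<Sum>j\<in>{Suc d..<k}. gentry r d j (m + 1)) else 0))"
begin

lemma odd_step_complex: "fnum (\<Phi> r) i = (if i \<le> m + 1 then gentry r (Suc d) 0 i else 0)"
proof -
  have h0: "gentry r (Suc d) 0 i = (\<Sum>j<r. gentry r d j i)"
    using gentry_Suc[of 0 r d i] by (simp add: lessThan_atLeast0)
  have \<Phi>r: "\<forall>i. fnum (\<Phi> r) i = (if i \<le> m then (\<Sum>j<r. gentry r d j i)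
                 else if i = m + 1 then (\<Sum>j\<in>{Suc d..<r}. gentry r d j (m + 1)) else 0)"
    using \<Phi>[of r] r by simp
  consider "i \<le> m" | "i = m + 1" | "m + 1 < i" by linarith
  then show ?thesis
  proof cases
    case 2
    then show ?thesis using \<Phi>r h0 gentry_odd_column_top[OF r d dr] by simp
  qed (use \<Phi>r h0 in simp_all)
qed

text \<open>The columns \<open>k \<le> j \<le> d - k\<close> cancel in the top
  entry, so their families are used without top faces.\<close>

lemma odd_step_low:
  assumes k: "1 \<le> k" "k < r"
  shows "\<exists>Ls. realizes (\<Phi> r) (m + 1) Ls (gentry r (Suc d) k)"
proof -
  have \<Phi>k: "is_complex (\<Phi> k)" "\<Delta> \<subseteq> \<Phi> k" "\<Phi> k \<subseteq> \<Phi> r" "\<forall>i\<le>m. fnum (\<Phi> k) i = (\<Sum>j<k. gentry r d j i)"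
    using \<Phi>[of k] k by auto
  obtain L0 where L0: "is_complex L0" "L0 \<subseteq> \<Phi> k" "\<forall>i. fnum L0 i = (if i \<le> m then fnum (\<Phi> k) i else 0)"
    using truncation[OF \<Phi>k(1), of 0 "m + 1"] fnum_nonneg by auto
  have L00: "fnum L0 0 = 1" using L0(3) \<Phi>k(4) gentry_column_0[OF r k(1)] by simp
  define K where "K = {k..d - k}"
  define G where "G j = (if j \<in> K then B j else C j)" for j
  define g where "g j = (if j \<in> K then (gentry r d j)(m + 1 := 0) else gentry r d j)" for j
  have fam: "\<forall>j\<in>{k..<r}. realizes \<Delta> (m + 1) (G j) (g j)"
  proof
    fix j assume j: "j \<in> {k..<r}"
    show "realizes \<Delta> (m + 1) (G j) (g j)"
    proof (cases "j \<in> K")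
      case True
      then show ?thesis using realizes_lift[OF B[of j]] j k unfolding G_def g_def by simp
    next
      case False
      then have "m < j" using j d unfolding K_def by auto
      then show ?thesis using C[of j] j False unfolding G_def g_def by simp
    qed
  qed
  have "\<forall>i\<le>m + 1. gentry r (Suc d) k i = cone_fnum L0 i + (\<Sum>j\<in>{k..<r}. g j i)"
  proof (intro allI impI)
    fix i assume "i \<le> m + 1"
    then consider "i \<le> m" | "i = m + 1" by linarith
    then show "gentry r (Suc d) k i = cone_fnum L0 i + (\<Sum>j\<in>{k..<r}. g j i)"
    proof cases
      case 1
      then have "(\<Sum>j\<in>{k..<r}. g j i) = (\<Sum>j\<in>{k..<r}. gentry r d j i)"
        unfolding g_def by (intro sum.cong) auto
      then show ?thesis using 1 L0(3) \<Phi>k(4) k by (simp add: gentry_Suc_cone[of k r])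
    next
      case 2
      have "(\<Sum>j\<in>{k..<r}. g j (m + 1)) = (\<Sum>j\<in>{k..<r}. if j \<in> K then 0 else gentry r d j (m + 1))"
        unfolding g_def by (intro sum.cong) auto
      then show ?thesis using 2 L0(3) \<Phi>k(4) k gentry_Suc_odd_middle[OF r d dr, of k]
        unfolding K_def by (simp add: cone_fnum_def)
    qed
  qed
  then have "realizes (\<Phi> r) (m + 1) (L0 # concat (map G [k..<r])) (gentry r (Suc d) k)"
    using L0 \<Phi>k by (intro extended_family_realizes[OF L0(1) L00 _ _ fam]) auto
  then show ?thesis ..
qed

text \<open>Column \<open>k > d\<close> of \<open>d + 1\<close> with any top entry \<open>t\<close> between \<open>0\<close> and its true value, which is
  at most the number of faces of \<open>\<Phi> k\<close> with \<open>m + 1\<close> vertices.\<close>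

lemma odd_step_high:
  assumes k: "d < k" "k < r" and t: "0 \<le> t" "t \<le> gentry r (Suc d) k (m + 2)"
  shows "\<exists>Ls. realizes (\<Phi> r) (m + 2) Ls ((gentry r (Suc d) k)(m + 2 := t))"
proof -
  have \<Phi>k: "is_complex (\<Phi> k)" "\<Delta> \<subseteq> \<Phi> k" "\<Phi> k \<subseteq> \<Phi> r"
    "\<forall>i\<le>m + 1. fnum (\<Phi> k) i = (\<Sum>j<k. gentry r d j i)"
    using \<Phi>[of k] k gentry_odd_column_top[OF r d k(1)] by (auto simp: le_Suc_eq)
  have "(\<Sum>j\<in>{k..<r}. gentry r d j (m + 2)) \<le> 0"
    using gentry_odd_top_nonpos[OF r d] by (intro sum_nonpos) simp
  then have "t \<le> fnum (\<Phi> k) (m + 1)"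
    using t(2) \<Phi>k(4) gentry_Suc[of k r d "m + 2"] k by simp
  then obtain L0 where L0: "is_complex L0" "L0 \<subseteq> \<Phi> k"
    "\<forall>i. fnum L0 i = (if i \<le> m then fnum (\<Phi> k) i else if i = m + 1 then t else 0)"
    using truncation[OF \<Phi>k(1) t(1), of "m + 1"] by auto
  have L00: "fnum L0 0 = 1" using L0(3) \<Phi>k(4) gentry_column_0[OF r] k by simp
  have fam: "\<forall>j\<in>{k..<r}. realizes \<Delta> (m + 2) (C j) ((gentry r d j)(m + 2 := 0))"
    using realizes_lift[OF C] d k by simp
  have "\<forall>i\<le>m + 2. ((gentry r (Suc d) k)(m + 2 := t)) i
                   = cone_fnum L0 i + (\<Sum>j\<in>{k..<r}. ((gentry r d j)(m + 2 := 0)) i)"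
  proof (intro allI impI)
    fix i assume "i \<le> m + 2"
    then consider "i \<le> m + 1" | "i = m + 2" by linarith
    then show "((gentry r (Suc d) k)(m + 2 := t)) i = cone_fnum L0 i + (\<Sum>j\<in>{k..<r}. ((gentry r d j)(m + 2 := 0)) i)"
    proof cases
      case 1
      then show ?thesis using L0(3) \<Phi>k(4) k by (simp add: gentry_Suc_cone[of k r])
    qed (use L0(3) in \<open>simp add: cone_fnum_def\<close>)
  qed
  then have "realizes (\<Phi> r) (m + 2) (L0 # concat (map C [k..<r])) ((gentry r (Suc d) k)(m + 2 := t))"
    using L0 \<Phi>k by (intro extended_family_realizes[OF L0(1) L00 _ _ fam]) auto
  then show ?thesis ..
qed

end

text \<open>The step from odd \<open>d = 2m + 1\<close> to \<open>d + 1\<close>: cone over the families of the columns, taking the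
  top entries \<open>m + 1\<close> only from the columns \<open>j > d\<close>.\<close>

lemma realizable_odd_step:
  assumes r: "1 \<le> r" and d: "d = 2 * m + 1" and dr: "d < r"
    and hyp: "realizable r d"
  shows "realizable r (Suc d)"
proof -
  have half: "d div 2 = m" "Suc d div 2 = m + 1" "odd d" "even (Suc d)" using d by simp_all
  obtain \<Delta> where \<Delta>: "is_complex \<Delta>" "\<forall>i. fnum \<Delta> i = (if i \<le> m then gentry r d 0 i else 0)"
    and Bex: "\<forall>k. 1 \<le> k \<and> k < r \<longrightarrow> (\<exists>Ls. realizes \<Delta> m Ls (gentry r d k))"
    and Cex: "\<forall>k. m < k \<and> k < r \<longrightarrow> (\<exists>Ls. realizes \<Delta> (m + 1) Ls (gentry r d k))"
    using hyp half unfolding realizable_def by auto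
  obtain B where B: "\<And>k. 1 \<le> k \<Longrightarrow> k < r \<Longrightarrow> realizes \<Delta> m (B k) (gentry r d k)"
    using Bex by metis
  obtain C where C: "\<And>k. m < k \<Longrightarrow> k < r \<Longrightarrow> realizes \<Delta> (m + 1) (C k) (gentry r d k)"
    using Cex by metis
  define E where "E j = (if j \<le> d then B j else C j)" for j
  define e where "e j = (gentry r d j)(m + 1 := (if d < j then gentry r d j (m + 1) else 0))" for j
  have E: "\<forall>j\<in>{1..<r}. realizes \<Delta> (m + 1) (E j) (e j)"
    using realizes_lift[OF B] C d unfolding E_def e_def by auto
  have "\<forall>j\<in>{1..<r}. \<forall>i\<le>m. e j i = gentry r d j i" unfolding e_def by simp
  from cone_chain_columns[OF \<Delta> E this] obtain \<Phi> where \<Phi>: "\<forall>k\<in>{1..r}. is_complex (\<Phi> k) \<and> \<Delta> \<subseteq> \<Phi> k \<and>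
      \<Phi> k \<subseteq> \<Phi> r \<and> (\<forall>i. fnum (\<Phi> k) i = (if i \<le> m then (\<Sum>j<k. gentry r d j i)
                                 else if i = m + 1 then (\<Sum>j\<in>{1..<k}. e j (m + 1)) else 0))"
    by auto
  have "(\<Sum>j\<in>{1..<k}. e j (m + 1)) = (\<Sum>j\<in>{Suc d..<k}. gentry r d j (m + 1))" for k
  proof -
    have "(\<Sum>j\<in>{1..<k}. e j (m + 1)) = (\<Sum>j\<in>{1..<k}. if d < j then gentry r d j (m + 1) else 0)"
      unfolding e_def by simp
    also have "\<dots> = (\<Sum>j\<in>{j\<in>{1..<k}. d < j}. gentry r d j (m + 1))"
      by (simp only: sum.inter_filter[OF finite_atLeastLessThan])
    also have "{j\<in>{1..<k}. d < j} = {Suc d..<k}" by auto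
    finally show ?thesis .
  qed
  then have \<Phi>': "\<And>k. k \<in> {1..r} \<Longrightarrow> is_complex (\<Phi> k) \<and> \<Delta> \<subseteq> \<Phi> k \<and> \<Phi> k \<subseteq> \<Phi> r \<and>
      (\<forall>i. fnum (\<Phi> k) i = (if i \<le> m then (\<Sum>j<k. gentry r d j i)
         else if i = m + 1 then (\<Sum>j\<in>{Suc d..<k}. gentry r d j (m + 1)) else 0))"
    using \<Phi> by auto
  note step = r d dr B C \<Phi>'
  show ?thesis
    unfolding realizable_def half
    using odd_step_complex[OF step] odd_step_low[OF step] odd_step_high[OF step] \<Phi>'[of r] r half
    by (intro exI[of _ "\<Phi> r"]) (auto simp: numeral_2_eq_2)
qed

lemma realizable_all:
  assumes "1 \<le> d" and "d \<le> r"
  shows "realizable r d"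
  using assms
proof (induction d)
  case (Suc d)
  have r: "1 \<le> r" using Suc.prems by simp
  show ?case
  proof (cases "d = 0")
    case True
    then show ?thesis using realizable_1[OF r] by simp
  next
    case False
    then have hyp: "realizable r d" using Suc by simp
    show ?thesis
    proof (cases "even d")
      case True
      then obtain m where "d = 2 * m" by blast
      then show ?thesis using realizable_even_step[OF r _ _ _ hyp] False Suc.prems by simp
    next
      case False
      then obtain m where "d = 2 * m + 1" using oddE by blast
      then show ?thesis using realizable_odd_step[OF r _ _ hyp] Suc.prems by simp
    qed
  qed
qed simp

lemma admissible_zero: "admissible f (replicate (length f) 0)"
  unfolding admissible_def by (intro exI[of _ "[]"]) (simp add: vsum_def)

lemma admissible_of_realizes:
  assumes \<Delta>: "is_complex \<Delta>" and Ls: "realizes \<Delta> s Ls h"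
  shows "admissible (map (fnum \<Delta>) [0..<s + 1]) (map h [0..<s + 1])"
proof -
  have fam: "link_family \<Delta> s Ls" and h: "map h [0..<s + 1] = map (family_fnum Ls) [0..<s + 1]"
    using Ls unfolding realizes_def by simp_all
  show ?thesis
  proof (cases "s = 0")
    case True
    have "Ls = []"
    proof (rule ccontr)
      assume "Ls \<noteq> []"
      then obtain L where "L \<in> set Ls" by (cases Ls) auto
      then have "fnum L 0 = 1" "fnum L 0 = 0" using fam True unfolding link_family_def by auto
      then show False by simp
    qed
    then have "map h [0..<s + 1] = map (family_fnum []) [0..<s + 1]" using h by simp
    also have "\<dots> = replicate (length (map (fnum \<Delta>) [0..<s + 1])) 0" using True by simp
    finally have "map h [0..<s + 1] = replicate (length (map (fnum \<Delta>) [0..<s + 1])) 0" .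
    then show ?thesis by (simp only: admissible_zero)
  next
    case False
    then have "2 \<le> s + 1" "link_family \<Delta> (s + 1 - 1) Ls" using fam by simp_all
    then show ?thesis unfolding h by (rule admissible_family[OF \<Delta>])
  qed
qed

lemma length_gvec: "length (gvec r d k) = d div 2 + 1"
  unfolding gvec_def ghat_def by simp

lemma gvec_vanishes: "r \<le> k \<Longrightarrow> gvec r d k = replicate (d div 2 + 1) 0"
proof -
  have "replicate (d div 2 + 2) (0::int) = replicate (d div 2 + 1) 0 @ [0]"
    by (simp add: replicate_append_same)
  then show "r \<le> k \<Longrightarrow> ?thesis" unfolding gvec_def ghat_def by simp
qed

lemma ghat_vanishes: "r \<le> k \<Longrightarrow> ghat r d k = replicate (d div 2 + 2) 0"
  unfolding ghat_def by simp

lemma gvec_0_fnum: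
  assumes "1 \<le> r" and "\<forall>i. fnum \<Delta> i = (if i \<le> d div 2 then gentry r d 0 i else 0)"
  shows "gvec r d 0 = map (fnum \<Delta>) [0..<d div 2 + 1]"
  using gvec_eq_gentry[of 0 r d] assms by simp

lemma realizable_fvector:
  assumes "realizable r d" and r: "1 \<le> r"
  shows "is_fvector (gvec r d 0)"
proof -
  obtain \<Delta> where \<Delta>: "is_complex \<Delta>" "\<forall>i. fnum \<Delta> i = (if i \<le> d div 2 then gentry r d 0 i else 0)"
    using assms(1) unfolding realizable_def by blast
  then have "fnum \<Delta> 0 = 1" "\<forall>i\<ge>d div 2 + 1. fnum \<Delta> i = 0" using gentry_0_0[OF r] by auto
  then show ?thesis unfolding gvec_0_fnum[OF r \<Delta>(2)] by (intro is_fvector_fnum[OF \<Delta>(1)]) auto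
qed

lemma realizable_admissible:
  assumes "realizable r d" and "1 \<le> k" and "k \<le> r"
  shows "admissible (gvec r d 0) (gvec r d k)"
proof (cases "k < r")
  case True
  obtain \<Delta> Ls where \<Delta>: "is_complex \<Delta>" "\<forall>i. fnum \<Delta> i = (if i \<le> d div 2 then gentry r d 0 i else 0)"
    and Ls: "realizes \<Delta> (d div 2) Ls (gentry r d k)"
    using assms True unfolding realizable_def by blast
  have "gvec r d 0 = map (fnum \<Delta>) [0..<d div 2 + 1]" using gvec_0_fnum \<Delta>(2) True by simp
  then show ?thesis using admissible_of_realizes[OF \<Delta>(1) Ls] gvec_eq_gentry[OF True] by simp
next
  case False
  then have "gvec r d k = replicate (length (gvec r d 0)) 0"
    using assms(3) by (simp add: gvec_vanishes length_gvec)
  then show ?thesis by (simp only: admissible_zero)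
qed

lemma realizable_admissible_top:
  assumes "realizable r d" and "odd d" and "d \<le> 2 * k"
  shows "admissible (gvec r d 0 @ [0]) (ghat r d k)"
proof (cases "k < r")
  case True
  have "d div 2 < k" using assms(2,3) odd_two_times_div_two_succ[of d] by linarith
  then obtain \<Delta> Ls where \<Delta>: "is_complex \<Delta>" "\<forall>i. fnum \<Delta> i = (if i \<le> d div 2 then gentry r d 0 i else 0)"
    and Ls: "realizes \<Delta> (d div 2 + 1) Ls (gentry r d k)"
    using assms(1,2) True unfolding realizable_def by blast
  have "gvec r d 0 @ [0] = map (fnum \<Delta>) [0..<d div 2 + 1 + 1]" using gvec_0_fnum \<Delta>(2) True by simp
  moreover have "ghat r d k = map (gentry r d k) [0..<d div 2 + 1 + 1]"
    using ghat_eq_gentry[OF True] by (simp add: add.assoc)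
  ultimately show ?thesis using admissible_of_realizes[OF \<Delta>(1) Ls] by simp
next
  case False
  then have "ghat r d k = replicate (length (gvec r d 0 @ [0])) 0"
    by (simp add: ghat_vanishes length_gvec)
  then show ?thesis by (simp only: admissible_zero)
qed

theorem mainTheorem10:
  fixes r d :: nat
  assumes "1 \<le> d" and "d \<le> r"
  shows "is_fvector (gvec r d 0)
     \<and> (\<forall>k. 1 \<le> k \<and> k \<le> r \<longrightarrow> admissible (gvec r d 0) (gvec r d k))
     \<and> (odd d \<longrightarrow> (\<forall>k. d \<le> 2 * k \<longrightarrow> admissible (gvec r d 0 @ [0]) (ghat r d k)))"
proof -
  have r: "1 \<le> r" using assms by simp
  have inv: "realizable r d" using realizable_all[OF assms] .
  show ?thesis
    using realizable_fvector[OF inv r] realizable_admissible[OF inv] realizable_admissible_top[OF inv]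
    by blast
qed

end
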